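(* For every $q\in(1,2]$ there exist a real Banach space $X$ whose modulus of smoothness satisfies $\rho(u,X)\le\gamma u^q$ for all $u\ge0$ (for some constant $\gamma>0$) and a dictionary $\mathcal D\subset X$ such that for every integer $m\ge1$ there is $f\in X$, $f\neq0$, with $\|f\|_{A_1(\mathcal D)}<\infty$, such that for every $\alpha\in[0,1]$, $$\frac{\sigma_m(f,\mathcal D)_X}{\|f\|_X^{1-\alpha}\|f\|_{A_1(\mathcal D)}^{\alpha}}\ge\frac12 m^{-\alpha/p},\qquad p:=\frac q{q-1}.$$
   Context: The modulus of smoothness is $\rho(u,X):=\sup_{\|x\|=\|y\|=1}\bigl(\tfrac12(\|x+uy\|+\|x-uy\|)-1\bigr)$. A (symmetric) dictionary is a set $\mathcal D\subset X$ of unit-norm elements with dense span and $g\in\mathcal D\Rightarrow-g\in\mathcal D$. $A_1(\mathcal D)$ is the closed convex hull of $\mathcal D$ and $\|f\|_{A_1(\mathcal D)}:=\inf\{M:f/M\in A_1(\mathcal D)\}$. $\Sigma_m(\mathcal D):=\{\sum_{i=1}^m c_ig_i: g_i\in\mathcal D, c_i\in\mathbb R\}$ and $\sigma_m(f,\mathcal D)_X:=\inf_{h\in\Sigma_m(\mathcal D)}\|f-h\|_X$ is the best $m$-term approximation. *)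

theory Defs
  imports "HOL-Analysis.Analysis" "HOL-Library.Function_Algebras"
begin

text \<open>Ambient vector space: real sequences, with pointwise scalar multiplication.
  Every real vector space of dimension at most the continuum (in particular every
  separable Banach space) is linearly isomorphic to a subspace of it.\<close>

instantiation "fun" :: (type, real_vector) real_vector
begin
definition scaleR_fun :: "real \<Rightarrow> ('a \<Rightarrow> 'b) \<Rightarrow> 'a \<Rightarrow> 'b"
  where "scaleR_fun c f = (\<lambda>x. c *\<^sub>R f x)"
instance
  by standard (auto simp: scaleR_fun_def fun_eq_iff scaleR_add_right scaleR_add_left)
end

type_synonym seq = "nat \<Rightarrow> real"

definition is_norm_on :: "seq set \<Rightarrow> (seq \<Rightarrow> real) \<Rightarrow> bool" where
  "is_norm_on V N \<longleftrightarrow> subspace V \<and>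
     (\<forall>x\<in>V. 0 \<le> N x) \<and> (\<forall>x\<in>V. N x = 0 \<longleftrightarrow> x = 0) \<and>
     (\<forall>x\<in>V. \<forall>c. N (c *\<^sub>R x) = \<bar>c\<bar> * N x) \<and>
     (\<forall>x\<in>V. \<forall>y\<in>V. N (x + y) \<le> N x + N y)"

definition is_banach :: "seq set \<Rightarrow> (seq \<Rightarrow> real) \<Rightarrow> bool" where
  "is_banach V N \<longleftrightarrow> is_norm_on V N \<and>
     (\<forall>s :: nat \<Rightarrow> seq. (\<forall>n. s n \<in> V) \<longrightarrow>
        (\<forall>e>0. \<exists>K. \<forall>m\<ge>K. \<forall>n\<ge>K. N (s m - s n) < e) \<longrightarrow>
        (\<exists>l\<in>V. (\<lambda>n. N (s n - l)) \<longlonglongrightarrow> 0))"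

definition mod_smooth :: "seq set \<Rightarrow> (seq \<Rightarrow> real) \<Rightarrow> real \<Rightarrow> real" where
  "mod_smooth V N u = (SUP (x, y) \<in> {(x, y). x \<in> V \<and> y \<in> V \<and> N x = 1 \<and> N y = 1}.
      (N (x + u *\<^sub>R y) + N (x - u *\<^sub>R y)) / 2 - 1)"

definition nclosure :: "seq set \<Rightarrow> (seq \<Rightarrow> real) \<Rightarrow> seq set \<Rightarrow> seq set" where
  "nclosure V N S = {x \<in> V. \<forall>e>0. \<exists>y\<in>S. N (x - y) < e}"

definition is_dictionary :: "seq set \<Rightarrow> (seq \<Rightarrow> real) \<Rightarrow> seq set \<Rightarrow> bool" where
  "is_dictionary V N D \<longleftrightarrow> D \<subseteq> V \<and> (\<forall>g\<in>D. N g = 1) \<and>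
     nclosure V N (span D) = V \<and> (\<forall>g\<in>D. - g \<in> D)"

definition A1 :: "seq set \<Rightarrow> (seq \<Rightarrow> real) \<Rightarrow> seq set \<Rightarrow> seq set" where
  "A1 V N D = nclosure V N (convex hull D)"

text \<open>The A_1(D)-norm, with value \<infinity> when no M works.\<close>
definition A1_norm :: "seq set \<Rightarrow> (seq \<Rightarrow> real) \<Rightarrow> seq set \<Rightarrow> seq \<Rightarrow> ereal" where
  "A1_norm V N D f = Inf (ereal ` {M. M > 0 \<and> (1 / M) *\<^sub>R f \<in> A1 V N D})"

definition Sigma_m :: "seq set \<Rightarrow> nat \<Rightarrow> seq set" where
  "Sigma_m D m = {(\<Sum>i<m. c i *\<^sub>R g i) | c g. \<forall>i<m. g i \<in> D}"

definition sigma_m :: "(seq \<Rightarrow> real) \<Rightarrow> seq set \<Rightarrow> nat \<Rightarrow> seq \<Rightarrow> real" where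
  "sigma_m N D m f = (INF h \<in> Sigma_m D m. N (f - h))"

end

theory Submission
  imports Defs
begin

text \<open>Take \<open>X = \<ell>\<^sup>q\<close> with the dictionary of signed unit vectors \<open>\<plusminus>e\<^sub>k\<close>.
  Clarkson's inequality \<open>|a + b|^q + |a - b|^q \<le> 2 (|a|^q + |b|^q)\<close>, valid for
  \<open>1 \<le> q \<le> 2\<close>, gives \<open>\<rho>(u) \<le> u^q\<close>. The vector \<open>f = e\<^sub>0 + \<dots> + e\<^sub>2\<^sub>m\<^sub>-\<^sub>1\<close> has
  \<open>\<parallel>f\<parallel> = (2m)^(1/q)\<close> and \<open>\<parallel>f\<parallel>\<^sub>A\<^sub>1 \<le> 2m\<close>, while an \<open>m\<close>-term combination of unit
  vectors vanishes on at least \<open>m\<close> of the \<open>2m\<close> coordinates where \<open>f = 1\<close>, so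
  \<open>\<sigma>\<^sub>m(f) \<ge> m^(1/q)\<close>. Hence the ratio is at least
  \<open>m^(1/q) / (2m)^((1 - \<alpha>)/q + \<alpha>) \<ge> m^(-\<alpha>/p) / 2\<close>.\<close>

lemma sum_apply: "(sum f A) x = (\<Sum>a\<in>A. f a x)"
  by (induction A rule: infinite_finite_induct) auto

lemma scaleR_apply [simp]: "(c *\<^sub>R f) x = c *\<^sub>R f x"
  by (simp add: scaleR_fun_def)

section \<open>Scalar inequalities\<close>

lemma powr_convex_nonneg:
  assumes "1 \<le> p"
  shows "convex_on {0..} (\<lambda>x::real. x powr p)"
proof (rule convex_on_linorderI)
  fix t x y :: real
  assume t: "0 < t" "t < 1" and x: "x \<in> {0..}" and y: "y \<in> {0..}" and "x < y"
  show "((1 - t) *\<^sub>R x + t *\<^sub>R y) powr p \<le> (1 - t) * x powr p + t * y powr p"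
  proof (cases "x = 0")
    case True
    have "t powr p \<le> t powr 1"
      using t assms by (intro powr_mono') auto
    then show ?thesis
      using True t y by (simp add: powr_mult mult_right_mono)
  next
    case False
    then show ?thesis
      using convex_onD[OF powr_convex[OF assms], of t x y] t x \<open>x < y\<close> by auto
  qed
qed simp

lemma abs_powr_convex:
  assumes "1 \<le> p"
  shows "convex_on UNIV (\<lambda>x::real. \<bar>x\<bar> powr p)"
proof (rule convex_onI)
  fix t x y :: real
  assume t: "0 < t" "t < 1"
  have "\<bar>(1 - t) *\<^sub>R x + t *\<^sub>R y\<bar> \<le> (1 - t) * \<bar>x\<bar> + t * \<bar>y\<bar>"
    using t abs_triangle_ineq[of "(1 - t) * x" "t * y"] by (simp add: abs_mult)
  then have "\<bar>(1 - t) *\<^sub>R x + t *\<^sub>R y\<bar> powr p \<le> ((1 - t) *\<^sub>R \<bar>x\<bar> + t *\<^sub>R \<bar>y\<bar>) powr p"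
    using assms by (intro powr_mono2) auto
  also have "\<dots> \<le> (1 - t) * \<bar>x\<bar> powr p + t * \<bar>y\<bar> powr p"
    using convex_onD[OF powr_convex_nonneg[OF assms], of t "\<bar>x\<bar>" "\<bar>y\<bar>"] t by auto
  finally show "\<bar>(1 - t) *\<^sub>R x + t *\<^sub>R y\<bar> powr p \<le> (1 - t) * \<bar>x\<bar> powr p + t * \<bar>y\<bar> powr p" .
qed simp

lemma powr_le_powr_iff:
  fixes a b q :: real
  assumes "0 < q" "0 \<le> a" "0 \<le> b"
  shows "a powr q \<le> b powr q \<longleftrightarrow> a \<le> b"
  using assms powr_mono2[of q a b] powr_less_mono2[of q b a] by (meson less_le_not_le not_le)

lemma abs_add_powr_le:
  fixes a b q :: real
  assumes "0 \<le> q"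
  shows "\<bar>a + b\<bar> powr q \<le> 2 powr q * (\<bar>a\<bar> powr q + \<bar>b\<bar> powr q)"
proof -
  have "\<bar>a + b\<bar> powr q \<le> (2 * max \<bar>a\<bar> \<bar>b\<bar>) powr q"
    using assms by (intro powr_mono2) auto
  also have "\<dots> = 2 powr q * max \<bar>a\<bar> \<bar>b\<bar> powr q"
    by (simp add: powr_mult)
  also have "\<dots> \<le> 2 powr q * (\<bar>a\<bar> powr q + \<bar>b\<bar> powr q)"
    by (intro mult_left_mono) (auto simp: max_def)
  finally show ?thesis .
qed

lemma powr_add_le_add_powr:
  fixes s t r :: real
  assumes "0 < r" "r \<le> 1" "0 \<le> s" "0 \<le> t"
  shows "(s + t) powr r \<le> s powr r + t powr r"
proof (cases "s + t = 0")
  case True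
  then show ?thesis using assms by auto
next
  case False
  then have st: "s + t > 0" using assms by auto
  have frac_le: "x / (s + t) \<le> (x / (s + t)) powr r" if "0 \<le> x" "x \<le> s + t" for x
  proof -
    have "(x / (s + t)) powr 1 \<le> (x / (s + t)) powr r"
      using that st assms by (intro powr_mono') auto
    then show ?thesis using that st by (cases "x = 0") auto
  qed
  have "1 = s / (s + t) + t / (s + t)"
    using st by (simp flip: add_divide_distrib)
  also have "\<dots> \<le> (s / (s + t)) powr r + (t / (s + t)) powr r"
    using frac_le[of s] frac_le[of t] assms by auto
  also have "\<dots> = (s powr r + t powr r) / (s + t) powr r"
    using st assms by (simp add: powr_divide add_divide_distrib)
  finally show ?thesis using st by (simp add: field_simps)
qed

lemma powr_midpoint_concave:
  fixes s t r :: real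
  assumes "0 < r" "r \<le> 1" "0 \<le> s" "0 \<le> t"
  shows "(s powr r + t powr r) / 2 \<le> ((s + t) / 2) powr r"
proof -
  have "((s powr r + t powr r) / 2) powr (1 / r)
      = ((1 - 1/2) *\<^sub>R s powr r + (1/2) *\<^sub>R t powr r) powr (1 / r)"
    by (simp add: field_simps)
  also have "\<dots> \<le> (1 - 1/2) * (s powr r) powr (1 / r) + (1/2) * (t powr r) powr (1 / r)"
    using assms by (intro convex_onD[OF powr_convex_nonneg]) auto
  also have "\<dots> = (s + t) / 2"
    using assms by (simp add: powr_powr field_simps)
  finally have "(((s powr r + t powr r) / 2) powr (1 / r)) powr r \<le> ((s + t) / 2) powr r"
    using assms by (intro powr_mono2) auto
  then show ?thesis
    using assms by (simp add: powr_powr)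
qed

text \<open>Write \<open>\<bar>x\<bar> powr q = (x\<^sup>2) powr (q/2)\<close> and use concavity and subadditivity of
  \<open>s \<mapsto> s powr (q/2)\<close> together with the parallelogram law.\<close>
lemma abs_add_powr_plus_abs_diff_powr_le:
  fixes a b q :: real
  assumes "1 \<le> q" "q \<le> 2"
  shows "\<bar>a + b\<bar> powr q + \<bar>a - b\<bar> powr q \<le> 2 * (\<bar>a\<bar> powr q + \<bar>b\<bar> powr q)"
proof -
  define r where "r = q / 2"
  have r: "0 < r" "r \<le> 1" using assms by (auto simp: r_def)
  have abs_powr: "\<bar>x\<bar> powr q = (x\<^sup>2) powr r" for x :: real
  proof -
    have "x\<^sup>2 = \<bar>x\<bar> powr 2"
      by (simp add: powr_numeral)
    then show ?thesis
      unfolding r_def by (simp only: powr_powr) simp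
  qed
  have "\<bar>a + b\<bar> powr q + \<bar>a - b\<bar> powr q = 2 * ((((a + b)\<^sup>2) powr r + ((a - b)\<^sup>2) powr r) / 2)"
    by (simp add: abs_powr)
  also have "\<dots> \<le> 2 * (((a + b)\<^sup>2 + (a - b)\<^sup>2) / 2) powr r"
    using powr_midpoint_concave[OF r, of "(a + b)\<^sup>2" "(a - b)\<^sup>2"] by auto
  also have "((a + b)\<^sup>2 + (a - b)\<^sup>2) / 2 = a\<^sup>2 + b\<^sup>2"
    by (simp add: power2_eq_square algebra_simps)
  also have "(a\<^sup>2 + b\<^sup>2) powr r \<le> (a\<^sup>2) powr r + (b\<^sup>2) powr r"
    using powr_add_le_add_powr[OF r] by auto
  finally show ?thesis
    by (simp add: abs_powr)
qed

section \<open>Norms and the \<open>A\<^sub>1\<close> ball\<close>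

lemma convex_unit_ball:
  assumes "is_norm_on V N"
  shows "convex {x \<in> V. N x \<le> 1}"
proof (rule convexI)
  fix x y and u v :: real
  assume x: "x \<in> {x \<in> V. N x \<le> 1}" and y: "y \<in> {x \<in> V. N x \<le> 1}"
    and uv: "0 \<le> u" "0 \<le> v" "u + v = 1"
  have V: "subspace V" and hom: "\<forall>x\<in>V. \<forall>c. N (c *\<^sub>R x) = \<bar>c\<bar> * N x"
    and tri: "\<forall>x\<in>V. \<forall>y\<in>V. N (x + y) \<le> N x + N y"
    using assms by (auto simp: is_norm_on_def)
  have "u *\<^sub>R x \<in> V" "v *\<^sub>R y \<in> V"
    using x y V by (auto intro: subspace_scale)
  then have "N (u *\<^sub>R x + v *\<^sub>R y) \<le> u * N x + v * N y"
    using tri x y hom uv by fastforce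
  also have "\<dots> \<le> u + v"
    using x y uv by (intro add_mono mult_left_le) auto
  finally show "u *\<^sub>R x + v *\<^sub>R y \<in> {x \<in> V. N x \<le> 1}"
    using \<open>u *\<^sub>R x \<in> V\<close> \<open>v *\<^sub>R y \<in> V\<close> V uv by (auto intro: subspace_add)
qed

lemma A1_subset_unit_ball:
  assumes norm: "is_norm_on V N" and D: "D \<subseteq> V" "\<And>g. g \<in> D \<Longrightarrow> N g \<le> 1"
  shows "A1 V N D \<subseteq> {x \<in> V. N x \<le> 1}"
proof
  fix x
  assume "x \<in> A1 V N D"
  then have x: "x \<in> V" and approx: "\<forall>e>0. \<exists>y\<in>convex hull D. N (x - y) < e"
    by (auto simp: A1_def nclosure_def)
  have hull: "convex hull D \<subseteq> {x \<in> V. N x \<le> 1}"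
    using D by (intro hull_minimal convex_unit_ball[OF norm]) auto
  have "N x \<le> 1 + e" if "0 < e" for e
  proof -
    obtain y where y: "y \<in> V" "N y \<le> 1" and close: "N (x - y) < e"
      using approx \<open>0 < e\<close> hull by blast
    have "x - y \<in> V"
      using norm x y by (auto simp: is_norm_on_def intro: subspace_diff)
    then have "N (y + (x - y)) \<le> N y + N (x - y)"
      using norm y unfolding is_norm_on_def by blast
    then show ?thesis
      using y close by simp
  qed
  then show "x \<in> {x \<in> V. N x \<le> 1}"
    using x by (auto intro: field_le_epsilon)
qed

lemma norm_le_A1_norm:
  assumes norm: "is_norm_on V N" and D: "D \<subseteq> V" "\<And>g. g \<in> D \<Longrightarrow> N g \<le> 1" and f: "f \<in> V"
  shows "ereal (N f) \<le> A1_norm V N D f"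
  unfolding A1_norm_def
proof (rule Inf_greatest)
  fix r
  assume "r \<in> ereal ` {M. 0 < M \<and> (1 / M) *\<^sub>R f \<in> A1 V N D}"
  then obtain M where M: "r = ereal M" "0 < M" "(1 / M) *\<^sub>R f \<in> A1 V N D"
    by auto
  then have "N ((1 / M) *\<^sub>R f) \<le> 1"
    using A1_subset_unit_ball[OF norm D] by blast
  then show "ereal (N f) \<le> r"
    using norm f M by (simp add: is_norm_on_def)
qed

lemma A1_norm_le:
  assumes norm: "is_norm_on V N" and "0 < M" and f: "f \<in> V"
    and hull: "(1 / M) *\<^sub>R f \<in> convex hull D"
  shows "A1_norm V N D f \<le> M"
proof -
  have "subspace V" "N 0 = 0"
    using norm subspace_0[of V] by (auto simp: is_norm_on_def)
  then have "(1 / M) *\<^sub>R f \<in> A1 V N D"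
    using f hull \<open>0 < M\<close> by (force simp: A1_def nclosure_def intro: subspace_scale)
  then show ?thesis
    unfolding A1_norm_def using \<open>0 < M\<close> by (intro Inf_lower) auto
qed

section \<open>The sequence space \<open>\<ell>\<^sup>q\<close>\<close>

definition lp_space :: "real \<Rightarrow> seq set" where
  "lp_space q = {x. summable (\<lambda>i. \<bar>x i\<bar> powr q)}"

definition lp_sum :: "real \<Rightarrow> seq \<Rightarrow> real" where
  "lp_sum q x = (\<Sum>i. \<bar>x i\<bar> powr q)"

definition lp_norm :: "real \<Rightarrow> seq \<Rightarrow> real" where
  "lp_norm q x = lp_sum q x powr (1 / q)"

lemma lp_norm_nonneg: "0 \<le> lp_norm q x"
  by (simp add: lp_norm_def)

lemma lp_sum_nonneg: "x \<in> lp_space q \<Longrightarrow> 0 \<le> lp_sum q x"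
  unfolding lp_sum_def lp_space_def by (auto intro: suminf_nonneg)

lemma lp_sum_finite_support:
  assumes "finite S" "\<And>i. i \<notin> S \<Longrightarrow> x i = 0"
  shows "x \<in> lp_space q" "lp_sum q x = (\<Sum>i\<in>S. \<bar>x i\<bar> powr q)"
  using summable_finite[OF assms(1), of "\<lambda>i. \<bar>x i\<bar> powr q"]
    suminf_finite[OF assms(1), of "\<lambda>i. \<bar>x i\<bar> powr q"] assms(2)
  by (auto simp: lp_space_def lp_sum_def)

lemma lp_space_scaleR: "x \<in> lp_space q \<Longrightarrow> c *\<^sub>R x \<in> lp_space q"
  unfolding lp_space_def by (auto simp: abs_mult powr_mult intro: summable_mult)

lemma lp_sum_scaleR: "x \<in> lp_space q \<Longrightarrow> lp_sum q (c *\<^sub>R x) = \<bar>c\<bar> powr q * lp_sum q x"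
  unfolding lp_sum_def lp_space_def by (auto simp: abs_mult powr_mult intro: suminf_mult)

lemma lp_sum_eq_0_iff: "x \<in> lp_space q \<Longrightarrow> lp_sum q x = 0 \<longleftrightarrow> x = 0"
  unfolding lp_sum_def lp_space_def by (subst suminf_eq_zero_iff) (auto simp: fun_eq_iff)

lemma lp_norm_eq_0_iff: "x \<in> lp_space q \<Longrightarrow> lp_norm q x = 0 \<longleftrightarrow> x = 0"
  by (simp add: lp_norm_def lp_sum_eq_0_iff)

context
  fixes q :: real
  assumes q: "1 \<le> q"
begin

lemma lp_space_add:
  assumes "x \<in> lp_space q" "y \<in> lp_space q"
  shows "x + y \<in> lp_space q"
proof -
  have "summable (\<lambda>i. 2 powr q * (\<bar>x i\<bar> powr q + \<bar>y i\<bar> powr q))"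
    using assms by (auto simp: lp_space_def intro: summable_mult summable_add)
  then have "summable (\<lambda>i. \<bar>x i + y i\<bar> powr q)"
    by (rule summable_comparison_test'[where N = 0]) (use q abs_add_powr_le in auto)
  then show ?thesis
    by (simp add: lp_space_def)
qed

lemma subspace_lp_space: "subspace (lp_space q)"
  unfolding subspace_def using lp_space_add lp_space_scaleR by (auto simp: lp_space_def)

lemma lp_space_diff: "x \<in> lp_space q \<Longrightarrow> y \<in> lp_space q \<Longrightarrow> x - y \<in> lp_space q"
  using subspace_lp_space by (rule subspace_diff)

lemma lp_norm_powr: "x \<in> lp_space q \<Longrightarrow> lp_norm q x powr q = lp_sum q x"
  using lp_sum_nonneg[of x q] q by (simp add: lp_norm_def powr_powr)

lemma lp_norm_scaleR: "x \<in> lp_space q \<Longrightarrow> lp_norm q (c *\<^sub>R x) = \<bar>c\<bar> * lp_norm q x"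
  using q lp_sum_nonneg[of x q]
  by (simp add: lp_norm_def lp_sum_scaleR powr_mult powr_powr)

lemma lp_norm_le_iff:
  assumes "x \<in> lp_space q" "0 \<le> e"
  shows "lp_norm q x \<le> e \<longleftrightarrow> lp_sum q x \<le> e powr q"
  using powr_le_powr_iff[of q "lp_norm q x" e] q assms lp_norm_powr[OF assms(1)] lp_norm_nonneg
  by simp

lemma lp_norm_less_iff:
  assumes "x \<in> lp_space q" "0 \<le> e"
  shows "lp_norm q x < e \<longleftrightarrow> lp_sum q x < e powr q"
  using powr_le_powr_iff[of q e "lp_norm q x"] q assms lp_norm_powr[OF assms(1)] lp_norm_nonneg
  by (simp add: not_le[symmetric])

lemma lp_sum_convex:
  assumes "x \<in> lp_space q" "y \<in> lp_space q" "0 \<le> t" "t \<le> 1"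
  shows "lp_sum q ((1 - t) *\<^sub>R x + t *\<^sub>R y) \<le> (1 - t) * lp_sum q x + t * lp_sum q y"
proof -
  have sx: "summable (\<lambda>i. \<bar>x i\<bar> powr q)" and sy: "summable (\<lambda>i. \<bar>y i\<bar> powr q)"
    using assms by (auto simp: lp_space_def)
  have "(1 - t) *\<^sub>R x + t *\<^sub>R y \<in> lp_space q"
    using assms lp_space_add lp_space_scaleR by auto
  then have "lp_sum q ((1 - t) *\<^sub>R x + t *\<^sub>R y) \<le> (\<Sum>i. (1 - t) * \<bar>x i\<bar> powr q + t * \<bar>y i\<bar> powr q)"
    unfolding lp_sum_def lp_space_def
    using assms convex_onD[OF abs_powr_convex[OF q]]
    by (intro suminf_le summable_add summable_mult sx sy) auto
  also have "\<dots> = (1 - t) * lp_sum q x + t * lp_sum q y"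
    unfolding lp_sum_def using sx sy
    by (simp add: suminf_add[symmetric] suminf_mult summable_mult)
  finally show ?thesis .
qed

text \<open>\<open>x + y\<close> is \<open>\<parallel>x\<parallel> + \<parallel>y\<parallel>\<close> times a convex combination of \<open>x/\<parallel>x\<parallel>\<close> and \<open>y/\<parallel>y\<parallel>\<close>,
  on which \<open>lp_sum\<close> is at most 1 by convexity.\<close>
lemma lp_norm_triangle:
  assumes x: "x \<in> lp_space q" and y: "y \<in> lp_space q"
  shows "lp_norm q (x + y) \<le> lp_norm q x + lp_norm q y"
proof (cases "x = 0 \<or> y = 0")
  case True
  then show ?thesis using lp_norm_nonneg by auto
next
  case False
  define a b where "a = lp_norm q x" and "b = lp_norm q y"
  have ab: "a > 0" "b > 0"
    using False x y lp_norm_nonneg[of q] lp_norm_eq_0_iff by (auto simp: a_def b_def less_le)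
  define x' y' where "x' = (1 / a) *\<^sub>R x" and "y' = (1 / b) *\<^sub>R y"
  define t where "t = b / (a + b)"
  have t: "0 \<le> t" "t \<le> 1" "1 - t = a / (a + b)"
    using ab by (auto simp: t_def field_simps)
  have x'y': "x' \<in> lp_space q" "y' \<in> lp_space q"
    using x y lp_space_scaleR by (auto simp: x'_def y'_def)
  have "lp_sum q x' = 1" "lp_sum q y' = 1"
    using x y ab lp_norm_powr[OF x'y'(1)] lp_norm_powr[OF x'y'(2)]
    by (auto simp: x'_def y'_def lp_norm_scaleR a_def b_def)
  then have "lp_sum q ((1 - t) *\<^sub>R x' + t *\<^sub>R y') \<le> 1 powr q"
    using lp_sum_convex[OF x'y' t(1,2)] by simp
  then have "lp_norm q ((1 - t) *\<^sub>R x' + t *\<^sub>R y') \<le> 1"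
    using x'y' lp_space_add lp_space_scaleR lp_norm_le_iff by simp
  moreover have "x + y = (a + b) *\<^sub>R ((1 - t) *\<^sub>R x' + t *\<^sub>R y')"
    using ab by (auto simp: fun_eq_iff x'_def y'_def t_def field_simps)
  ultimately show ?thesis
    using ab x'y' lp_space_add lp_space_scaleR
    by (simp add: lp_norm_scaleR a_def b_def)
qed

lemma is_norm_on_lp: "is_norm_on (lp_space q) (lp_norm q)"
  unfolding is_norm_on_def
  by (simp add: subspace_lp_space lp_norm_nonneg lp_norm_eq_0_iff lp_norm_scaleR lp_norm_triangle)

lemma abs_le_lp_norm:
  assumes "x \<in> lp_space q"
  shows "\<bar>x i\<bar> \<le> lp_norm q x"
proof -
  have "(\<Sum>j\<in>{i}. \<bar>x j\<bar> powr q) \<le> lp_sum q x"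
    using assms unfolding lp_sum_def lp_space_def by (intro sum_le_suminf) auto
  then have "(\<bar>x i\<bar> powr q) powr (1 / q) \<le> lp_sum q x powr (1 / q)"
    using q by (intro powr_mono2) auto
  then show ?thesis
    using q by (simp add: powr_powr lp_norm_def)
qed

lemma lp_sum_le_of_pointwise_limit:
  assumes y: "\<And>m. y m \<in> lp_space q" and lim: "\<And>i. (\<lambda>m. y m i) \<longlonglongrightarrow> z i"
    and bound: "eventually (\<lambda>m. lp_sum q (y m) \<le> C) sequentially"
  shows "z \<in> lp_space q" "lp_sum q z \<le> C"
proof -
  have partial_sum_le: "(\<Sum>i<J. \<bar>z i\<bar> powr q) \<le> C" for J
  proof (rule LIMSEQ_le_const2)
    show "(\<lambda>m. \<Sum>i<J. \<bar>y m i\<bar> powr q) \<longlonglongrightarrow> (\<Sum>i<J. \<bar>z i\<bar> powr q)"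
      using q by (auto intro!: tendsto_sum tendsto_powr2 tendsto_rabs lim)
    have "(\<Sum>i<J. \<bar>y m i\<bar> powr q) \<le> lp_sum q (y m)" for m
      using y[of m] unfolding lp_sum_def lp_space_def by (intro sum_le_suminf) auto
    then show "\<exists>N. \<forall>m\<ge>N. (\<Sum>i<J. \<bar>y m i\<bar> powr q) \<le> C"
      using bound unfolding eventually_sequentially by (meson order_trans)
  qed
  show "z \<in> lp_space q"
    unfolding lp_space_def mem_Collect_eq
    by (rule summableI_nonneg_bounded[OF _ partial_sum_le]) auto
  then show "lp_sum q z \<le> C"
    unfolding lp_sum_def lp_space_def by (intro suminf_le_const partial_sum_le) auto
qed

lemma lp_norm_diff_limit_le:
  assumes s: "\<And>n. s n \<in> lp_space q" and l: "\<And>i. (\<lambda>n. s n i) \<longlonglongrightarrow> l i"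
    and cauchy: "\<And>m. K \<le> m \<Longrightarrow> lp_norm q (s n - s m) \<le> e" and "0 \<le> e"
  shows "s n - l \<in> lp_space q" "lp_norm q (s n - l) \<le> e"
proof -
  have diff: "\<And>m. s n - s m \<in> lp_space q"
    using s lp_space_diff by auto
  have lim: "\<And>i. (\<lambda>m. (s n - s m) i) \<longlonglongrightarrow> (s n - l) i"
    by (auto intro: tendsto_diff l)
  have "eventually (\<lambda>m. lp_sum q (s n - s m) \<le> e powr q) sequentially"
    using cauchy lp_norm_le_iff[OF diff \<open>0 \<le> e\<close>] unfolding eventually_sequentially by blast
  from lp_sum_le_of_pointwise_limit[of "\<lambda>m. s n - s m" "s n - l", OF diff lim this]
  show "s n - l \<in> lp_space q" "lp_norm q (s n - l) \<le> e"
    using lp_norm_le_iff \<open>0 \<le> e\<close> by auto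
qed

lemma is_banach_lp: "is_banach (lp_space q) (lp_norm q)"
  unfolding is_banach_def
proof (intro conjI is_norm_on_lp allI impI)
  fix s :: "nat \<Rightarrow> seq"
  assume s: "\<forall>n. s n \<in> lp_space q"
    and cauchy: "\<forall>e>0. \<exists>K. \<forall>m\<ge>K. \<forall>n\<ge>K. lp_norm q (s m - s n) < e"
  have "Cauchy (\<lambda>n. s n i)" for i
  proof (rule CauchyI)
    fix e :: real
    assume "0 < e"
    then obtain K where K: "\<forall>m\<ge>K. \<forall>n\<ge>K. lp_norm q (s m - s n) < e"
      using cauchy by blast
    have "\<bar>s m i - s n i\<bar> < e" if "K \<le> m" "K \<le> n" for m n
      using abs_le_lp_norm[OF lp_space_diff, of "s m" "s n" i] s K that by fastforce
    then show "\<exists>K. \<forall>m\<ge>K. \<forall>n\<ge>K. norm (s m i - s n i) < e"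
      by auto
  qed
  then obtain l where l: "\<And>i. (\<lambda>n. s n i) \<longlonglongrightarrow> l i"
    unfolding Cauchy_convergent_iff convergent_def by metis
  have close: "\<exists>K. \<forall>n\<ge>K. s n - l \<in> lp_space q \<and> lp_norm q (s n - l) \<le> e" if "0 < e" for e
  proof -
    obtain K where K: "\<forall>m\<ge>K. \<forall>n\<ge>K. lp_norm q (s m - s n) < e"
      using cauchy \<open>0 < e\<close> by blast
    then have "s n - l \<in> lp_space q \<and> lp_norm q (s n - l) \<le> e" if "K \<le> n" for n
      using lp_norm_diff_limit_le[of s l K n e] s l that \<open>0 < e\<close> by (simp add: less_imp_le)
    then show ?thesis
      by blast
  qed
  obtain K where "s K - l \<in> lp_space q"
    using close[of 1] by auto
  then have "s K - (s K - l) \<in> lp_space q"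
    using s lp_space_diff by blast
  moreover have "(\<lambda>n. lp_norm q (s n - l)) \<longlonglongrightarrow> 0"
  proof (rule LIMSEQ_I)
    fix r :: real
    assume "0 < r"
    then obtain K where "\<forall>n\<ge>K. lp_norm q (s n - l) \<le> r / 2"
      using close[of "r / 2"] by auto
    then show "\<exists>K. \<forall>n\<ge>K. norm (lp_norm q (s n - l) - 0) < r"
      using \<open>0 < r\<close> lp_norm_nonneg by fastforce
  qed
  ultimately show "\<exists>l\<in>lp_space q. (\<lambda>n. lp_norm q (s n - l)) \<longlonglongrightarrow> 0"
    by auto
qed

lemma lp_sum_add_plus_lp_sum_diff_le:
  assumes "q \<le> 2" "x \<in> lp_space q" "y \<in> lp_space q"
  shows "lp_sum q (x + y) + lp_sum q (x - y) \<le> 2 * (lp_sum q x + lp_sum q y)"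
proof -
  have sx: "summable (\<lambda>i. \<bar>x i\<bar> powr q)" and sy: "summable (\<lambda>i. \<bar>y i\<bar> powr q)"
    and s_add: "summable (\<lambda>i. \<bar>x i + y i\<bar> powr q)"
    and s_diff: "summable (\<lambda>i. \<bar>x i - y i\<bar> powr q)"
    using assms lp_space_add lp_space_diff by (auto simp: lp_space_def)
  have "lp_sum q (x + y) + lp_sum q (x - y) = (\<Sum>i. \<bar>x i + y i\<bar> powr q + \<bar>x i - y i\<bar> powr q)"
    unfolding lp_sum_def using suminf_add[OF s_add s_diff] by simp
  also have "\<dots> \<le> (\<Sum>i. 2 * (\<bar>x i\<bar> powr q + \<bar>y i\<bar> powr q))"
    using abs_add_powr_plus_abs_diff_powr_le[OF q assms(1)]
    by (intro suminf_le summable_add summable_mult s_add s_diff sx sy) auto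
  also have "\<dots> = 2 * (lp_sum q x + lp_sum q y)"
    unfolding lp_sum_def by (simp only: suminf_mult[OF summable_add[OF sx sy]] suminf_add[OF sx sy])
  finally show ?thesis .
qed

lemma lp_norm_add_diff_le:
  assumes "q \<le> 2" "0 \<le> u"
    and x: "x \<in> lp_space q" "lp_norm q x = 1" and y: "y \<in> lp_space q" "lp_norm q y = 1"
  shows "(lp_norm q (x + u *\<^sub>R y) + lp_norm q (x - u *\<^sub>R y)) / 2 - 1 \<le> u powr q"
proof -
  define A B where "A = lp_norm q (x + u *\<^sub>R y)" and "B = lp_norm q (x - u *\<^sub>R y)"
  have uy: "u *\<^sub>R y \<in> lp_space q"
    using y lp_space_scaleR by blast
  have "A powr q + B powr q \<le> 2 * (lp_sum q x + lp_sum q (u *\<^sub>R y))"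
    using lp_sum_add_plus_lp_sum_diff_le[OF assms(1) x(1) uy]
      lp_norm_powr lp_space_add[OF x(1) uy] lp_space_diff[OF x(1) uy]
    by (simp add: A_def B_def)
  also have "\<dots> = 2 * (1 + u powr q)"
    using x y assms(2) lp_norm_powr[OF x(1)] lp_norm_powr[OF y(1)] by (simp add: lp_sum_scaleR)
  finally have "((1 - 1/2) *\<^sub>R A + (1/2) *\<^sub>R B) powr q \<le> 1 + u powr q"
    using convex_onD[OF powr_convex_nonneg[OF q], of "1/2" A B] lp_norm_nonneg
    by (simp add: A_def B_def)
  then have "(A + B) / 2 \<le> (1 + u powr q) powr (1 / q)"
    using lp_norm_nonneg q
      powr_mono2[of "1 / q" "((1 - 1/2) *\<^sub>R A + (1/2) *\<^sub>R B) powr q" "1 + u powr q"]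
    by (simp add: A_def B_def powr_powr add_divide_distrib)
  also have "\<dots> \<le> (1 + u powr q) powr 1"
    using q by (intro powr_mono) auto
  finally have "(A + B) / 2 \<le> 1 + u powr q"
    by simp
  then show ?thesis
    unfolding A_def B_def by linarith
qed

lemma mod_smooth_lp_le:
  assumes "q \<le> 2" "0 \<le> u"
  shows "mod_smooth (lp_space q) (lp_norm q) u \<le> u powr q"
  unfolding mod_smooth_def
proof (rule cSUP_least)
  have "indicator {0} \<in> lp_space q" "lp_norm q (indicator {0}) = 1"
    using lp_sum_finite_support[of "{0}" "indicator {0}" q] by (auto simp: lp_norm_def)
  then show "{(x, y). x \<in> lp_space q \<and> y \<in> lp_space q \<and> lp_norm q x = 1 \<and> lp_norm q y = 1} \<noteq> {}"
    by blast
next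
  fix p
  assume "p \<in> {(x, y). x \<in> lp_space q \<and> y \<in> lp_space q \<and> lp_norm q x = 1 \<and> lp_norm q y = 1}"
  then obtain x y where "p = (x, y)"
    and xy: "x \<in> lp_space q" "lp_norm q x = 1" "y \<in> lp_space q" "lp_norm q y = 1"
    by auto
  with lp_norm_add_diff_le[OF assms xy]
  show "(case p of (x, y) \<Rightarrow> (lp_norm q (x + u *\<^sub>R y) + lp_norm q (x - u *\<^sub>R y)) / 2 - 1) \<le> u powr q"
    by simp
qed

end

section \<open>The dictionary of signed unit vectors\<close>

definition signed_unit_seqs :: "seq set" where
  "signed_unit_seqs = range (\<lambda>k. indicator {k}) \<union> range (\<lambda>k. - indicator {k})"

lemma sum_scaleR_indicator_singleton:
  assumes "finite S"
  shows "(\<Sum>k\<in>S. c k *\<^sub>R (indicator {k} :: seq)) = (\<lambda>i. if i \<in> S then c i else 0)"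
  using assms by (auto simp: fun_eq_iff sum_apply indicator_def of_bool_def if_distrib sum.delta
      cong: if_cong)

lemma finite_support_in_span:
  assumes "finite S" "\<And>i. i \<notin> S \<Longrightarrow> x i = 0"
  shows "x \<in> span signed_unit_seqs"
proof -
  have "x = (\<Sum>k\<in>S. x k *\<^sub>R indicator {k})"
    using assms by (auto simp: sum_scaleR_indicator_singleton)
  also have "\<dots> \<in> span signed_unit_seqs"
    by (intro span_sum span_scale span_base) (auto simp: signed_unit_seqs_def)
  finally show ?thesis .
qed

lemma signed_unit_seqs_lp:
  assumes "g \<in> signed_unit_seqs"
  shows "g \<in> lp_space q" "lp_norm q g = 1"
proof -
  obtain k where "g = indicator {k} \<or> g = - indicator {k}"
    using assms by (auto simp: signed_unit_seqs_def)
  then have "\<And>i. i \<notin> {k} \<Longrightarrow> g i = 0" "\<bar>g k\<bar> = 1"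
    by auto
  then show "g \<in> lp_space q" "lp_norm q g = 1"
    using lp_sum_finite_support[of "{k}" g q] by (auto simp: lp_norm_def)
qed

lemma lp_sum_truncation_tendsto:
  assumes "x \<in> lp_space q"
  shows "(\<lambda>K. lp_sum q (x - (\<lambda>i. if i < K then x i else 0))) \<longlonglongrightarrow> 0"
proof -
  define f where "f = (\<lambda>i. \<bar>x i\<bar> powr q)"
  have f: "summable f"
    using assms by (simp add: lp_space_def f_def)
  have "(\<lambda>i. \<bar>(x - (\<lambda>i. if i < K then x i else 0)) i\<bar> powr q)
      = (\<lambda>i. f i - (if i \<in> {..<K} then f i else 0))" for K
    by (auto simp: f_def fun_eq_iff)
  then have "lp_sum q (x - (\<lambda>i. if i < K then x i else 0)) = suminf f - (\<Sum>i<K. f i)" for K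
    unfolding lp_sum_def
    using sums_unique[OF sums_diff[OF summable_sums[OF f] sums_If_finite_set]] by simp
  moreover have "(\<lambda>K. suminf f - (\<Sum>i<K. f i)) \<longlonglongrightarrow> suminf f - suminf f"
    using f by (intro tendsto_diff tendsto_const summable_LIMSEQ)
  ultimately show ?thesis
    by simp
qed

lemma nclosure_span_signed_unit_seqs:
  assumes "1 \<le> q"
  shows "nclosure (lp_space q) (lp_norm q) (span signed_unit_seqs) = lp_space q"
proof -
  have "\<exists>y\<in>span signed_unit_seqs. lp_norm q (x - y) < e" if x: "x \<in> lp_space q" and "0 < e" for x e
  proof -
    have "eventually (\<lambda>K. lp_sum q (x - (\<lambda>i. if i < K then x i else 0)) < e powr q) sequentially"
      using order_tendstoD(2)[OF lp_sum_truncation_tendsto[OF x], of "e powr q"] \<open>0 < e\<close> by simp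
    then obtain K where K: "lp_sum q (x - (\<lambda>i. if i < K then x i else 0)) < e powr q"
      unfolding eventually_sequentially by blast
    define y where "y = (\<lambda>i. if i < K then x i else 0)"
    have y: "y \<in> lp_space q" "y \<in> span signed_unit_seqs"
      using lp_sum_finite_support[of "{..<K}" y] finite_support_in_span[of "{..<K}" y]
      by (auto simp: y_def)
    have "lp_norm q (x - y) < e"
      using K \<open>0 < e\<close> lp_norm_less_iff[OF assms lp_space_diff[OF assms x y(1)]] by (simp add: y_def)
    with y(2) show ?thesis
      by blast
  qed
  then show ?thesis
    by (auto simp: nclosure_def)
qed

lemma is_dictionary_signed_unit_seqs:
  assumes "1 \<le> q"
  shows "is_dictionary (lp_space q) (lp_norm q) signed_unit_seqs"
  unfolding is_dictionary_def
  using signed_unit_seqs_lp nclosure_span_signed_unit_seqs[OF assms]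
  by (auto simp: signed_unit_seqs_def)

section \<open>Best \<open>m\<close>-term approximation of a block vector\<close>

lemma zero_in_Sigma_m:
  assumes "g \<in> D"
  shows "0 \<in> Sigma_m D m"
  unfolding Sigma_m_def using assms by (auto intro!: exI[of _ "\<lambda>_. 0"] exI[of _ "\<lambda>_. g"])

lemma Sigma_m_signed_unit_seqs_support:
  assumes "h \<in> Sigma_m signed_unit_seqs m"
  obtains Z where "finite Z" "card Z \<le> m" "\<And>j. j \<notin> Z \<Longrightarrow> h j = 0"
proof -
  obtain c g where h: "h = (\<Sum>i<m. c i *\<^sub>R g i)" and g: "\<forall>i<m. g i \<in> signed_unit_seqs"
    using assms by (auto simp: Sigma_m_def)
  have "\<exists>k. \<forall>j. j \<noteq> k \<longrightarrow> g i j = 0" if i: "i < m" for i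
  proof -
    obtain k where "g i = indicator {k} \<or> g i = - indicator {k}"
      using g i by (auto simp: signed_unit_seqs_def)
    then show ?thesis
      by (auto intro!: exI[of _ k])
  qed
  then obtain k where k: "\<And>i j. i < m \<Longrightarrow> j \<noteq> k i \<Longrightarrow> g i j = 0"
    by metis
  show ?thesis
  proof
    show "finite (k ` {..<m})" "card (k ` {..<m}) \<le> m"
      using card_image_le[of "{..<m}" k] by auto
    show "h j = 0" if "j \<notin> k ` {..<m}" for j
      using that k by (force simp: h sum_apply image_iff intro!: sum.neutral)
  qed
qed

lemma lp_norm_indicator_lessThan:
  shows "indicator {..<n} \<in> lp_space q" "lp_norm q (indicator {..<n}) = real n powr (1 / q)"
  using lp_sum_finite_support[of "{..<n}" "indicator {..<n}" q] by (auto simp: lp_norm_def)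

lemma sigma_m_indicator_lessThan_ge:
  assumes "1 \<le> q"
  shows "real (n - m) powr (1 / q) \<le> sigma_m (lp_norm q) signed_unit_seqs m (indicator {..<n})"
  unfolding sigma_m_def
proof (rule cINF_greatest)
  have "indicator {0} \<in> signed_unit_seqs"
    by (simp add: signed_unit_seqs_def)
  then show "Sigma_m signed_unit_seqs m \<noteq> {}"
    using zero_in_Sigma_m by blast
next
  fix h
  assume "h \<in> Sigma_m signed_unit_seqs m"
  then obtain Z where Z: "finite Z" "card Z \<le> m" and h: "\<And>j. j \<notin> Z \<Longrightarrow> h j = 0"
    by (metis Sigma_m_signed_unit_seqs_support)
  define T where "T = {..<n} \<union> Z"
  have support: "(indicator {..<n} - h) j = 0" if "j \<notin> T" for j
    using that h by (auto simp: T_def)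
  have "real (n - m) \<le> real (card ({..<n} - Z))"
    using diff_card_le_card_Diff[OF Z(1), of "{..<n}"] Z(2) by simp
  also have "\<dots> = (\<Sum>j\<in>{..<n} - Z. \<bar>(indicator {..<n} - h) j\<bar> powr q)"
    using h by simp
  also have "\<dots> \<le> (\<Sum>j\<in>T. \<bar>(indicator {..<n} - h) j\<bar> powr q)"
    using Z(1) by (intro sum_mono2) (auto simp: T_def)
  also have "\<dots> = lp_sum q (indicator {..<n} - h)"
    using lp_sum_finite_support(2)[of T "indicator {..<n} - h", OF _ support] Z(1)
    by (simp add: T_def)
  finally have "real (n - m) powr (1 / q) \<le> lp_sum q (indicator {..<n} - h) powr (1 / q)"
    using assms by (intro powr_mono2) auto
  then show "real (n - m) powr (1 / q) \<le> lp_norm q (indicator {..<n} - h)"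
    by (simp add: lp_norm_def)
qed

lemma A1_norm_indicator_lessThan:
  assumes "1 \<le> q" "1 \<le> n"
  obtains r where "A1_norm (lp_space q) (lp_norm q) signed_unit_seqs (indicator {..<n}) = ereal r"
    and "lp_norm q (indicator {..<n}) \<le> r" "r \<le> real n"
proof -
  have dict: "signed_unit_seqs \<subseteq> lp_space q" "\<And>g. g \<in> signed_unit_seqs \<Longrightarrow> lp_norm q g \<le> 1"
    using signed_unit_seqs_lp by auto
  have "(1 / real n) *\<^sub>R indicator {..<n} = (\<Sum>k<n. (1 / real n) *\<^sub>R (indicator {k} :: seq))"
    using sum_scaleR_indicator_singleton[of "{..<n}" "\<lambda>_. 1 / real n"]
    by (auto simp: fun_eq_iff indicator_def)
  also have "\<dots> \<in> convex hull signed_unit_seqs"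
    using assms(2) by (intro convex_sum) (auto simp: signed_unit_seqs_def intro: hull_inc)
  finally have "A1_norm (lp_space q) (lp_norm q) signed_unit_seqs (indicator {..<n}) \<le> real n"
    using assms by (intro A1_norm_le is_norm_on_lp lp_norm_indicator_lessThan) auto
  moreover have "ereal (lp_norm q (indicator {..<n})) \<le> A1_norm (lp_space q) (lp_norm q) signed_unit_seqs (indicator {..<n})"
    using assms by (intro norm_le_A1_norm is_norm_on_lp dict lp_norm_indicator_lessThan)
  ultimately show ?thesis
    using that by (cases "A1_norm (lp_space q) (lp_norm q) signed_unit_seqs (indicator {..<n})") auto
qed

text \<open>The exponent of the denominator is \<open>(1 - \<alpha>)/q + \<alpha> \<le> 1\<close>, and it exceeds \<open>1/q\<close> by exactly
  \<open>\<alpha>/p\<close>, where \<open>p = q/(q - 1)\<close>.\<close>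
lemma approximation_ratio_lower_bound:
  fixes q m s n a \<alpha> :: real
  assumes "1 < q" "1 \<le> m" "0 \<le> \<alpha>" "\<alpha> \<le> 1"
    and s: "m powr (1 / q) \<le> s" and n: "n = (2 * m) powr (1 / q)" and a: "n \<le> a" "a \<le> 2 * m"
  shows "1 / 2 * m powr (- \<alpha> / (q / (q - 1))) \<le> s / (n powr (1 - \<alpha>) * a powr \<alpha>)"
proof -
  define E where "E = (1 - \<alpha>) / q + \<alpha>"
  have "(1 - \<alpha>) / q \<le> 1 - \<alpha>"
    using assms by (simp add: divide_le_eq mult_le_cancel_left1)
  then have "E \<le> 1"
    by (simp add: E_def)
  have "0 < n"
    using n assms by simp
  then have "0 < a"
    using a by linarith
  with \<open>0 < n\<close> have pos: "0 < n powr (1 - \<alpha>) * a powr \<alpha>"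
    by simp
  have "n powr (1 - \<alpha>) * a powr \<alpha> \<le> (2 * m) powr ((1 - \<alpha>) / q) * (2 * m) powr \<alpha>"
    using n a assms \<open>0 < a\<close> by (auto simp: powr_powr intro!: mult_left_mono powr_mono2)
  also have "\<dots> = 2 powr E * m powr E"
    using assms by (simp add: E_def powr_add powr_mult)
  finally have denominator: "n powr (1 - \<alpha>) * a powr \<alpha> \<le> 2 powr E * m powr E" .
  have "1 / 2 * m powr (- \<alpha> / (q / (q - 1))) * (n powr (1 - \<alpha>) * a powr \<alpha>)
      \<le> 1 / 2 * m powr (- \<alpha> / (q / (q - 1))) * (2 powr E * m powr E)"
    using denominator by (intro mult_left_mono) auto
  also have "\<dots> = 1 / 2 * 2 powr E * m powr (- \<alpha> / (q / (q - 1)) + E)"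
    unfolding powr_add by (simp only: mult_ac)
  also have "- \<alpha> / (q / (q - 1)) + E = 1 / q"
    using assms by (simp add: E_def field_simps)
  also have "1 / 2 * 2 powr E * m powr (1 / q) \<le> 1 / 2 * 2 powr 1 * m powr (1 / q)"
    using \<open>E \<le> 1\<close> by (intro mult_right_mono mult_left_mono powr_mono) auto
  also have "\<dots> \<le> s"
    using s by simp
  finally show ?thesis
    using pos by (simp add: le_divide_eq)
qed

lemma exists_badly_approximable_in_lp:
  assumes "1 < q" "1 \<le> m"
  shows "\<exists>f\<in>lp_space q. f \<noteq> 0 \<and> A1_norm (lp_space q) (lp_norm q) signed_unit_seqs f < \<infinity> \<and>
    (\<forall>\<alpha>. 0 \<le> \<alpha> \<and> \<alpha> \<le> 1 \<longrightarrow>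
      1 / 2 * real m powr (- \<alpha> / (q / (q - 1))) \<le> sigma_m (lp_norm q) signed_unit_seqs m f /
        (lp_norm q f powr (1 - \<alpha>) * real_of_ereal (A1_norm (lp_space q) (lp_norm q) signed_unit_seqs f) powr \<alpha>))"
proof -
  have q: "1 \<le> q"
    using assms by simp
  obtain r where r: "A1_norm (lp_space q) (lp_norm q) signed_unit_seqs (indicator {..<2 * m}) = ereal r"
    "lp_norm q (indicator {..<2 * m}) \<le> r" "r \<le> real (2 * m)"
    using A1_norm_indicator_lessThan[OF q, of "2 * m"] assms by auto
  have sigma: "real m powr (1 / q) \<le> sigma_m (lp_norm q) signed_unit_seqs m (indicator {..<2 * m})"
    using sigma_m_indicator_lessThan_ge[OF q, of "2 * m" m] by simp
  have norm: "lp_norm q (indicator {..<2 * m}) = (2 * real m) powr (1 / q)"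
    using lp_norm_indicator_lessThan(2)[of q "2 * m"] by simp
  have "indicator {..<2 * m} \<noteq> (0 :: seq)"
    using assms by (auto simp: fun_eq_iff indicator_def intro!: exI[of _ 0])
  then show ?thesis
    using lp_norm_indicator_lessThan(1) approximation_ratio_lower_bound[OF assms(1) _ _ _ sigma norm] r assms
    by (intro bexI[of _ "indicator {..<2 * m}"]) auto
qed

theorem mainTheorem6:
  fixes q :: real
  assumes "1 < q" and "q \<le> 2"
  shows "\<exists>(V :: seq set) (N :: seq \<Rightarrow> real) (\<gamma> :: real) (D :: seq set).
     is_banach V N \<and> \<gamma> > 0 \<and> (\<forall>u\<ge>0. mod_smooth V N u \<le> \<gamma> * u powr q) \<and>
     is_dictionary V N D \<and>
     (\<forall>m::nat. m \<ge> 1 \<longrightarrow>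
        (\<exists>f\<in>V. f \<noteq> 0 \<and> A1_norm V N D f < \<infinity> \<and>
           (\<forall>\<alpha>::real. 0 \<le> \<alpha> \<and> \<alpha> \<le> 1 \<longrightarrow>
              sigma_m N D m f / (N f powr (1 - \<alpha>) * real_of_ereal (A1_norm V N D f) powr \<alpha>)
                \<ge> 1 / 2 * real m powr (- \<alpha> / (q / (q - 1))))))"
proof (intro exI conjI allI impI)
  have q: "1 \<le> q"
    using assms by simp
  show "is_banach (lp_space q) (lp_norm q)"
    by (rule is_banach_lp[OF q])
  show "mod_smooth (lp_space q) (lp_norm q) u \<le> 1 * u powr q" if "0 \<le> u" for u
    using mod_smooth_lp_le[OF q assms(2) that] by simp
  show "is_dictionary (lp_space q) (lp_norm q) signed_unit_seqs"
    by (rule is_dictionary_signed_unit_seqs[OF q])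
qed (use exists_badly_approximable_in_lp[OF assms(1)] in auto)

end
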